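(* Assume the stiffness matrix $\mathbf A=(a_{\ell,k})_{\ell,k\ge2}$ of the operator $L$ belongs to $\mathcal D_e(\eta_L)$ for some $\eta_L>0$, and let $v\in\mathcal A_G^{\eta,t}$ for some $\eta>0$, $t\in(0,1]$. Suppose one of the following holds: (a) $\mathbf A$ is banded with $2p+1$ nonzero diagonals (i.e. $a_{\ell,k}=0$ whenever $|\ell-k|>p$); in this case set $\bar\eta=\eta/(2p+1)^t$, $\bar t=t$; (b) $\mathbf A$ is dense, but $\eta<\eta_L$; in this case set $\bar\eta=\zeta(t)\eta$, $\bar t=\frac{t}{1+t}$, where $\zeta(t):=\big(\frac{1+t}{2}\big)^{\frac{t}{1+t}}$ for $0<t\le1$. Then $Lv\in\mathcal A_G^{\bar\eta,\bar t}$ and $\|Lv\|_{\mathcal A_G^{\bar\eta,\bar t}}\le C\|v\|_{\mathcal A_G^{\eta,t}}$ with a constant $C$ independent of $v$.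
   Context: $I=(-1,1)$, $V=H^1_0(I)$, $L_k$ the Legendre polynomial of degree $k$ with $L_k(1)=1$, and $\eta_k=\frac{1}{\sqrt{4k-2}}(L_{k-2}-L_k)$, $k\in\mathbb N_2:=\{k\in\mathbb N:k\ge2\}$, the Babuška–Shen basis, orthonormal in $V$ for $(u,v)\mapsto\int_I u'v'$. Each $v\in V$ is $v=\sum_{k\ge2}\hat v_k\eta_k$ with $\|v\|:=\|v'\|_{L^2}=(\sum|\hat v_k|^2)^{1/2}$; each $f\in H^{-1}(I)$ has coefficients $\hat f_k=\langle f,\eta_k\rangle$ and $\|f\|:=(\sum_{k\ge2}|\hat f_k|^2)^{1/2}$. $L$ is the operator $Lw=-(\nu w')'+\sigma w$ with smooth real coefficients, $0<\nu_*\le\nu\le\nu^*$, $0\le\sigma\le\sigma^*$, associated with the bilinear form $a(w,v)=\int_I\nu w'v'+\int_I\sigma wv$ on $V$; its stiffness matrix is $a_{\ell,k}=a(\eta_k,\eta_\ell)$, so the coefficient vector of $Lv$ is $\mathbf A\mathbf v$. A matrix belongs to $\mathcal D_e(\eta_L)$ if there is $c_L>0$ with $|a_{m,n}|\le c_Le^{-\eta_L|m-n|}$ for all $m,n\ge2$. For a coefficient sequence (of a function in $V$ or a functional in $H^{-1}$), the best $N$-term approximation error is $E_N=\inf_{\Lambda\subset\mathbb N_2,|\Lambda|=N}(\sum_{k\notin\Lambda}|\hat v_k|^2)^{1/2}$, and $\mathcal A_G^{\eta,t}$ is the set of such $v$ with $\|v\|_{\mathcal A_G^{\eta,t}}:=\sup_{N\ge0}E_N(v)e^{\eta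 N^t}<\infty$. *)

theory Defs
  imports "HOL-Analysis.Analysis"
begin

text \<open>Legendre polynomials (normalised by L_k(1) = 1) via Bonnet's recurrence.\<close>
fun legendre :: "nat \<Rightarrow> real \<Rightarrow> real" where
  "legendre 0 x = 1"
| "legendre (Suc 0) x = x"
| "legendre (Suc (Suc n)) x =
     ((2 * real n + 3) * x * legendre (Suc n) x - (real n + 1) * legendre n x) / (real n + 2)"

definition bs_eta :: "nat \<Rightarrow> real \<Rightarrow> real" where
  "bs_eta k x = (legendre (k - 2) x - legendre k x) / sqrt (4 * real k - 2)"

text \<open>Stiffness matrix a_{l,k} = a(eta_k, eta_l) of L w = -(nu w')' + sig w.\<close>
definition stiffness :: "(real \<Rightarrow> real) \<Rightarrow> (real \<Rightarrow> real) \<Rightarrow> nat \<Rightarrow> nat \<Rightarrow> real" where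
  "stiffness nu sig l k = integral {-1..1}
     (\<lambda>x. nu x * deriv (bs_eta k) x * deriv (bs_eta l) x + sig x * bs_eta k x * bs_eta l x)"

definition smooth_fun :: "(real \<Rightarrow> real) \<Rightarrow> bool" where
  "smooth_fun f \<longleftrightarrow> (\<forall>n x. ((deriv ^^ n) f) differentiable (at x))"

definition in_De :: "(nat \<Rightarrow> nat \<Rightarrow> real) \<Rightarrow> real \<Rightarrow> bool" where
  "in_De A etaL \<longleftrightarrow> (\<exists>cL>0. \<forall>m\<ge>2. \<forall>n\<ge>2.
      \<bar>A m n\<bar> \<le> cL * exp (- etaL * \<bar>real m - real n\<bar>))"

definition banded :: "(nat \<Rightarrow> nat \<Rightarrow> real) \<Rightarrow> nat \<Rightarrow> bool" where
  "banded A p \<longleftrightarrow> (\<forall>l\<ge>2. \<forall>k\<ge>2. \<bar>real l - real k\<bar> > real p \<longrightarrow> A l k = 0)"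

text \<open>Coefficient vector (A v)_l = sum_{k>=2} a_{l,k} v_k of L v.\<close>
definition apply_mat :: "(nat \<Rightarrow> nat \<Rightarrow> real) \<Rightarrow> (nat \<Rightarrow> real) \<Rightarrow> nat \<Rightarrow> real" where
  "apply_mat A v l = (if l \<ge> 2 then (\<Sum>\<^sub>\<infinity>k\<in>{2..}. A l k * v k) else 0)"

definition best_N_err :: "(nat \<Rightarrow> real) \<Rightarrow> nat \<Rightarrow> real" where
  "best_N_err v N = (INF \<Lambda>\<in>{\<Lambda>. \<Lambda> \<subseteq> {2..} \<and> finite \<Lambda> \<and> card \<Lambda> = N}.
      sqrt (\<Sum>\<^sub>\<infinity>k\<in>{2..} - \<Lambda>. (v k)\<^sup>2))"

definition in_AG :: "real \<Rightarrow> real \<Rightarrow> (nat \<Rightarrow> real) \<Rightarrow> bool" where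
  "in_AG eta t v \<longleftrightarrow> (\<lambda>k. (v k)\<^sup>2) summable_on {2..} \<and>
      bdd_above (range (\<lambda>N. best_N_err v N * exp (eta * real N powr t)))"

definition AG_norm :: "real \<Rightarrow> real \<Rightarrow> (nat \<Rightarrow> real) \<Rightarrow> real" where
  "AG_norm eta t v = (SUP N. best_N_err v N * exp (eta * real N powr t))"

definition zeta :: "real \<Rightarrow> real" where
  "zeta t = ((1 + t) / 2) powr (t / (1 + t))"

end

theory Submission
  imports Defs
begin

text \<open>Keep the N largest coefficients of v (a greedy choice realises the best N-term
  approximation). The image of the discarded tail is controlled by the Schur test, since the rows
  and columns of an exponentially decaying matrix are uniformly summable. Each kept coefficient
  contributes one column of A; truncating that column to a window around the diagonal costs an
  error proportional to the coefficient times q to the power of the window radius. For a banded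
  matrix the window of width 2p+1 is exact, so M = (2p+1)N entries of A v suffice. For a dense
  matrix the radius of the n-th window grows like (\<eta>/\<eta>_L)(N^t - n^t), which
  compensates the size of the coefficient; the windows then contain about
  2N^(1+t)/(1+t) indices, and inverting this relation gives the exponent t/(1+t) and the
  factor \<zeta>(t).\<close>

section \<open>Bounds in \<ell>^2\<close>

text \<open>A bound on the \<ell>^2 norm over indices k \<ge> 2, stated through finite partial sums so that
  it carries no summability side condition.\<close>
definition l2_bounded :: "(nat \<Rightarrow> real) \<Rightarrow> real \<Rightarrow> bool" where
  "l2_bounded x B \<longleftrightarrow> (\<forall>F. finite F \<longrightarrow> F \<subseteq> {2..} \<longrightarrow> L2_set x F \<le> B)"

lemma l2_bounded_nonneg: "l2_bounded x B \<Longrightarrow> 0 \<le> B"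
  unfolding l2_bounded_def by (metis L2_set_empty empty_subsetI finite.emptyI)

lemma l2_bounded_sum_squares:
  assumes "l2_bounded x B" "finite F" "F \<subseteq> {2..}"
  shows "(\<Sum>k\<in>F. (x k)\<^sup>2) \<le> B\<^sup>2"
proof -
  have "L2_set x F \<le> B" using assms unfolding l2_bounded_def by auto
  hence "(L2_set x F)\<^sup>2 \<le> B\<^sup>2" by (intro power_mono) auto
  moreover have "(L2_set x F)\<^sup>2 = (\<Sum>k\<in>F. (x k)\<^sup>2)"
    unfolding L2_set_def by (simp add: sum_nonneg)
  ultimately show ?thesis by simp
qed

lemma l2_bounded_summable:
  assumes "l2_bounded x B" shows "(\<lambda>k. (x k)\<^sup>2) summable_on {2..}"
proof (rule nonneg_bdd_above_summable_on)
  show "bdd_above (sum (\<lambda>k. (x k)\<^sup>2) ` {F. F \<subseteq> {2..} \<and> finite F})"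
    unfolding bdd_above_def using l2_bounded_sum_squares[OF assms] by blast
qed simp

lemma l2_bounded_sqrt_infsum_le:
  assumes "l2_bounded x B" shows "sqrt (\<Sum>\<^sub>\<infinity>k\<in>{2..}. (x k)\<^sup>2) \<le> B"
proof -
  have "(\<Sum>\<^sub>\<infinity>k\<in>{2..}. (x k)\<^sup>2) \<le> B\<^sup>2"
    by (rule infsum_le_finite_sums[OF l2_bounded_summable[OF assms]])
      (rule l2_bounded_sum_squares[OF assms])
  thus ?thesis using l2_bounded_nonneg[OF assms] by (intro real_le_lsqrt)
qed

lemma l2_bounded_abs: assumes "l2_bounded x B" "k \<ge> 2" shows "\<bar>x k\<bar> \<le> B"
proof -
  have "L2_set x {k} \<le> B"
    using assms(1)[unfolded l2_bounded_def, rule_format, of "{k}"] assms(2) by simp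
  thus ?thesis unfolding L2_set_def by simp
qed

lemma l2_bounded_zero: "l2_bounded (\<lambda>k. 0) 0"
  unfolding l2_bounded_def L2_set_def by simp

lemma l2_bounded_mono: "l2_bounded x a \<Longrightarrow> a \<le> b \<Longrightarrow> l2_bounded x b"
  unfolding l2_bounded_def using order_trans by blast

lemma l2_bounded_add:
  assumes "l2_bounded x a" "l2_bounded y b" shows "l2_bounded (\<lambda>k. x k + y k) (a + b)"
  unfolding l2_bounded_def
proof (intro allI impI)
  fix F :: "nat set" assume "finite F" "F \<subseteq> {2..}"
  hence "L2_set x F \<le> a" "L2_set y F \<le> b" using assms unfolding l2_bounded_def by auto
  thus "L2_set (\<lambda>k. x k + y k) F \<le> a + b" using L2_set_triangle_ineq[of x y F] by linarith
qed

lemma l2_bounded_sum: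
  assumes "finite I" "\<And>i. i \<in> I \<Longrightarrow> l2_bounded (f i) (b i)"
  shows "l2_bounded (\<lambda>k. \<Sum>i\<in>I. f i k) (\<Sum>i\<in>I. b i)"
  using assms
proof (induction I rule: finite_induct)
  case empty then show ?case by (simp add: l2_bounded_zero)
next
  case (insert i I)
  have "l2_bounded (\<lambda>k. f i k + (\<Sum>i\<in>I. f i k)) (b i + (\<Sum>i\<in>I. b i))"
    using insert by (intro l2_bounded_add) auto
  thus ?case by (simp add: insert.hyps)
qed

lemma l2_bounded_dominated:
  assumes "l2_bounded x B" "\<And>k. k \<ge> 2 \<Longrightarrow> \<bar>y k\<bar> \<le> \<bar>x k\<bar>" shows "l2_bounded y B"
  unfolding l2_bounded_def
proof (intro allI impI)
  fix F :: "nat set" assume F: "finite F" "F \<subseteq> {2..}"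
  have "(\<Sum>k\<in>F. (y k)\<^sup>2) \<le> (\<Sum>k\<in>F. (x k)\<^sup>2)"
    using F assms(2) by (intro sum_mono) (auto simp: abs_le_square_iff)
  hence "L2_set y F \<le> L2_set x F" unfolding L2_set_def by simp
  moreover have "L2_set x F \<le> B" using assms(1) F unfolding l2_bounded_def by blast
  ultimately show "L2_set y F \<le> B" by linarith
qed

definition index_dist :: "nat \<Rightarrow> nat \<Rightarrow> nat" where
  "index_dist l k = (if k \<le> l then l - k else k - l)"

lemma index_dist_commute: "index_dist l k = index_dist k l"
  unfolding index_dist_def by auto

lemma abs_diff_eq_index_dist: "\<bar>real l - real k\<bar> = real (index_dist l k)"
  unfolding index_dist_def by auto

lemma sum_power_le_geometric_tail:
  fixes q :: real
  assumes q: "0 \<le> q" "q < 1" and J: "finite J" "\<And>j. j \<in> J \<Longrightarrow> m \<le> j"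
  shows "(\<Sum>j\<in>J. q ^ j) \<le> q ^ m / (1 - q)"
proof -
  define n where "n = max m (if J = {} then m else Max J)"
  have sub: "J \<subseteq> {m..n}" using J unfolding n_def by (auto split: if_splits)
  have "(\<Sum>j\<in>J. q ^ j) \<le> (\<Sum>j=m..n. q ^ j)"
    by (rule sum_mono2) (use sub q in auto)
  also have "(\<Sum>j=m..n. q ^ j) = (q ^ m - q ^ Suc n) / (1 - q)"
    using sum_gp_multiplied[of m n q] q unfolding n_def by (simp add: field_simps)
  also have "\<dots> \<le> q ^ m / (1 - q)"
    using q by (intro divide_right_mono) auto
  finally show ?thesis .
qed

lemma sum_power_index_dist_ge_le:
  fixes q :: real
  assumes q: "0 \<le> q" "q < 1" and F: "finite F"
  shows "(\<Sum>l\<in>{l\<in>F. m \<le> index_dist l k}. q ^ index_dist l k) \<le> 2 * q ^ m / (1 - q)"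
proof -
  define F1 where "F1 = {l\<in>F. m \<le> index_dist l k \<and> k \<le> l}"
  define F2 where "F2 = {l\<in>F. m \<le> index_dist l k \<and> \<not> k \<le> l}"
  have fin: "finite F1" "finite F2" using F unfolding F1_def F2_def by auto
  have "(\<Sum>l\<in>F1. q ^ index_dist l k) = (\<Sum>j\<in>(\<lambda>l. l - k) ` F1. q ^ j)"
    by (subst sum.reindex) (auto simp: inj_on_def F1_def index_dist_def)
  also have "\<dots> \<le> q ^ m / (1 - q)"
    by (rule sum_power_le_geometric_tail) (use q fin in \<open>auto simp: F1_def index_dist_def\<close>)
  finally have b1: "(\<Sum>l\<in>F1. q ^ index_dist l k) \<le> q ^ m / (1 - q)" .
  have "(\<Sum>l\<in>F2. q ^ index_dist l k) = (\<Sum>j\<in>(\<lambda>l. k - l) ` F2. q ^ j)"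
    by (subst sum.reindex) (auto simp: inj_on_def F2_def index_dist_def)
  also have "\<dots> \<le> q ^ m / (1 - q)"
    by (rule sum_power_le_geometric_tail) (use q fin in \<open>auto simp: F2_def index_dist_def\<close>)
  finally have b2: "(\<Sum>l\<in>F2. q ^ index_dist l k) \<le> q ^ m / (1 - q)" .
  have "{l\<in>F. m \<le> index_dist l k} = F1 \<union> F2" "F1 \<inter> F2 = {}"
    unfolding F1_def F2_def by auto
  hence "(\<Sum>l\<in>{l\<in>F. m \<le> index_dist l k}. q ^ index_dist l k)
      = (\<Sum>l\<in>F1. q ^ index_dist l k) + (\<Sum>l\<in>F2. q ^ index_dist l k)"
    using fin by (simp add: sum.union_disjoint)
  thus ?thesis using b1 b2 by simp
qed

section \<open>Exponentially decaying matrices and the Schur test\<close>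

definition exp_decay :: "(nat \<Rightarrow> nat \<Rightarrow> real) \<Rightarrow> real \<Rightarrow> real \<Rightarrow> bool" where
  "exp_decay A c q \<longleftrightarrow> 0 \<le> c \<and> 0 < q \<and> q < 1 \<and>
     (\<forall>m n. m \<ge> 2 \<longrightarrow> n \<ge> 2 \<longrightarrow> \<bar>A m n\<bar> \<le> c * q ^ index_dist m n)"

lemma in_De_imp_exp_decay:
  assumes "0 < etaL" "in_De A etaL"
  shows "\<exists>c. exp_decay A c (exp (- etaL))"
proof -
  obtain c where c: "c > 0" "\<forall>m\<ge>2. \<forall>n\<ge>2. \<bar>A m n\<bar> \<le> c * exp (- etaL * \<bar>real m - real n\<bar>)"
    using assms(2) unfolding in_De_def by blast
  have "exp (- etaL * \<bar>real m - real n\<bar>) = exp (- etaL) ^ index_dist m n" for m n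
    by (simp add: abs_diff_eq_index_dist mult.commute flip: exp_of_nat_mult)
  thus ?thesis using c assms(1) unfolding exp_decay_def by (intro exI[of _ c]) auto
qed

definition schur_const :: "real \<Rightarrow> real \<Rightarrow> real" where
  "schur_const c q = 2 * c / (1 - q)"

lemma schur_const_nonneg: "exp_decay A c q \<Longrightarrow> 0 \<le> schur_const c q"
  unfolding exp_decay_def schur_const_def by auto

lemma exp_decay_sum_le:
  assumes "exp_decay A c q" "finite F"
  shows "(\<Sum>l\<in>F. c * q ^ index_dist l k) \<le> schur_const c q"
proof -
  have d: "0 \<le> c" "0 \<le> q" "q < 1" using assms(1) unfolding exp_decay_def by auto
  have "(\<Sum>l\<in>F. c * q ^ index_dist l k) = c * (\<Sum>l\<in>{l\<in>F. 0 \<le> index_dist l k}. q ^ index_dist l k)"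
    by (simp add: sum_distrib_left)
  also have "\<dots> \<le> c * (2 * q ^ 0 / (1 - q))"
    by (rule mult_left_mono[OF sum_power_index_dist_ge_le]) (use d assms(2) in auto)
  finally show ?thesis unfolding schur_const_def by (simp add: mult.commute)
qed

lemma exp_decay_row_sum_le:
  assumes "exp_decay A c q" "l \<ge> 2" "finite G" "G \<subseteq> {2..}"
  shows "(\<Sum>k\<in>G. \<bar>A l k\<bar>) \<le> schur_const c q"
proof -
  have "(\<Sum>k\<in>G. \<bar>A l k\<bar>) \<le> (\<Sum>k\<in>G. c * q ^ index_dist k l)"
    using assms unfolding exp_decay_def by (intro sum_mono) (metis index_dist_commute subsetD atLeast_iff)
  also have "\<dots> \<le> schur_const c q" by (rule exp_decay_sum_le[OF assms(1,3)])
  finally show ?thesis .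
qed

lemma exp_decay_col_sum_le:
  assumes "exp_decay A c q" "k \<ge> 2" "finite F" "F \<subseteq> {2..}"
  shows "(\<Sum>l\<in>F. \<bar>A l k\<bar>) \<le> schur_const c q"
proof -
  have "(\<Sum>l\<in>F. \<bar>A l k\<bar>) \<le> (\<Sum>l\<in>F. c * q ^ index_dist l k)"
    using assms unfolding exp_decay_def by (intro sum_mono) auto
  also have "\<dots> \<le> schur_const c q" by (rule exp_decay_sum_le[OF assms(1,3)])
  finally show ?thesis .
qed

lemma schur_test_finite:
  fixes a :: "nat \<Rightarrow> nat \<Rightarrow> real"
  assumes F: "finite F" and G: "finite G" and S: "0 \<le> S"
    and row: "\<And>l. l \<in> F \<Longrightarrow> (\<Sum>k\<in>G. \<bar>a l k\<bar>) \<le> S"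
    and col: "\<And>k. k \<in> G \<Longrightarrow> (\<Sum>l\<in>F. \<bar>a l k\<bar>) \<le> S"
  shows "(\<Sum>l\<in>F. (\<Sum>k\<in>G. a l k * x k)\<^sup>2) \<le> S\<^sup>2 * (\<Sum>k\<in>G. (x k)\<^sup>2)"
proof -
  have row_sq: "(\<Sum>k\<in>G. a l k * x k)\<^sup>2 \<le> S * (\<Sum>k\<in>G. \<bar>a l k\<bar> * (x k)\<^sup>2)" if l: "l \<in> F" for l
  proof -
    have "\<bar>\<Sum>k\<in>G. a l k * x k\<bar> \<le> (\<Sum>k\<in>G. sqrt \<bar>a l k\<bar> * (sqrt \<bar>a l k\<bar> * \<bar>x k\<bar>))"
      using sum_abs[of "\<lambda>k. a l k * x k" G] by (simp add: abs_mult mult.assoc[symmetric])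
    hence "(\<Sum>k\<in>G. a l k * x k)\<^sup>2 \<le> (\<Sum>k\<in>G. sqrt \<bar>a l k\<bar> * (sqrt \<bar>a l k\<bar> * \<bar>x k\<bar>))\<^sup>2"
      by (metis abs_ge_zero power2_abs power_mono)
    also have "\<dots> \<le> (\<Sum>k\<in>G. (sqrt \<bar>a l k\<bar>)\<^sup>2) * (\<Sum>k\<in>G. (sqrt \<bar>a l k\<bar> * \<bar>x k\<bar>)\<^sup>2)"
      by (rule Cauchy_Schwarz_ineq_sum)
    also have "\<dots> = (\<Sum>k\<in>G. \<bar>a l k\<bar>) * (\<Sum>k\<in>G. \<bar>a l k\<bar> * (x k)\<^sup>2)"
      by (simp add: power_mult_distrib)
    also have "\<dots> \<le> S * (\<Sum>k\<in>G. \<bar>a l k\<bar> * (x k)\<^sup>2)"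
      by (rule mult_right_mono[OF row[OF l]]) (simp add: sum_nonneg)
    finally show ?thesis .
  qed
  have "(\<Sum>l\<in>F. (\<Sum>k\<in>G. a l k * x k)\<^sup>2) \<le> (\<Sum>l\<in>F. S * (\<Sum>k\<in>G. \<bar>a l k\<bar> * (x k)\<^sup>2))"
    by (rule sum_mono) (rule row_sq)
  also have "\<dots> = S * (\<Sum>k\<in>G. (\<Sum>l\<in>F. \<bar>a l k\<bar>) * (x k)\<^sup>2)"
    by (simp add: sum_distrib_left sum_distrib_right sum.swap[of _ F G])
  also have "\<dots> \<le> S * (\<Sum>k\<in>G. S * (x k)\<^sup>2)"
    by (intro mult_left_mono sum_mono mult_right_mono col) (use S in auto)
  also have "\<dots> = S\<^sup>2 * (\<Sum>k\<in>G. (x k)\<^sup>2)"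
    by (simp add: sum_distrib_left power2_eq_square mult.assoc)
  finally show ?thesis .
qed

lemma exp_decay_row_summable:
  assumes A: "exp_decay A c q" and x: "l2_bounded x B" and l: "l \<ge> 2"
  shows "(\<lambda>k. A l k * x k) summable_on {2..}"
proof -
  have "sum (\<lambda>k. norm (A l k * x k)) G \<le> schur_const c q * B" if "G \<subseteq> {2..}" "finite G" for G
  proof -
    have "sum (\<lambda>k. norm (A l k * x k)) G \<le> (\<Sum>k\<in>G. \<bar>A l k\<bar>) * B"
      unfolding sum_distrib_right
      by (rule sum_mono) (use l2_bounded_abs[OF x] that in \<open>auto simp: abs_mult intro!: mult_left_mono\<close>)
    also have "\<dots> \<le> schur_const c q * B"
      by (rule mult_right_mono[OF exp_decay_row_sum_le[OF A l that(2,1)] l2_bounded_nonneg[OF x]])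
    finally show ?thesis .
  qed
  hence "(\<lambda>k. norm (A l k * x k)) summable_on {2..}"
    by (intro nonneg_bdd_above_summable_on) (auto simp: bdd_above_def)
  thus ?thesis by (rule abs_summable_summable)
qed

lemma apply_mat_l2_bounded:
  assumes A: "exp_decay A c q" and x: "l2_bounded x B"
  shows "l2_bounded (apply_mat A x) (schur_const c q * B)"
  unfolding l2_bounded_def
proof (intro allI impI)
  fix F :: "nat set" assume F: "finite F" "F \<subseteq> {2..}"
  have S: "0 \<le> schur_const c q" using schur_const_nonneg[OF A] .
  have "((\<lambda>k. A l k * x k) has_sum apply_mat A x l) {2..}" if "l \<in> F" for l
    using F that has_sum_infsum[OF exp_decay_row_summable[OF A x]] unfolding apply_mat_def by auto
  hence lim: "((\<lambda>G. \<Sum>l\<in>F. (\<Sum>k\<in>G. A l k * x k)\<^sup>2) \<longlongrightarrow> (\<Sum>l\<in>F. (apply_mat A x l)\<^sup>2))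
               (finite_subsets_at_top {2..})"
    by (intro tendsto_sum tendsto_power) (auto simp: has_sum_def)
  have "eventually (\<lambda>G. (\<Sum>l\<in>F. (\<Sum>k\<in>G. A l k * x k)\<^sup>2) \<le> (schur_const c q * B)\<^sup>2)
          (finite_subsets_at_top {2..})"
  proof (rule eventually_finite_subsets_at_top_weakI)
    fix G :: "nat set" assume G: "finite G" "G \<subseteq> {2..}"
    have "(\<Sum>l\<in>F. (\<Sum>k\<in>G. A l k * x k)\<^sup>2) \<le> (schur_const c q)\<^sup>2 * (\<Sum>k\<in>G. (x k)\<^sup>2)"
      by (rule schur_test_finite[OF F(1) G(1) S])
        (use exp_decay_row_sum_le[OF A _ G] exp_decay_col_sum_le[OF A _ F] F G in auto)
    also have "\<dots> \<le> (schur_const c q)\<^sup>2 * B\<^sup>2"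
      by (rule mult_left_mono[OF l2_bounded_sum_squares[OF x G]]) simp
    finally show "(\<Sum>l\<in>F. (\<Sum>k\<in>G. A l k * x k)\<^sup>2) \<le> (schur_const c q * B)\<^sup>2"
      by (simp add: power_mult_distrib)
  qed
  hence "(\<Sum>l\<in>F. (apply_mat A x l)\<^sup>2) \<le> (schur_const c q * B)\<^sup>2"
    by (intro tendsto_upperbound[OF lim]) simp_all
  thus "L2_set (apply_mat A x) F \<le> schur_const c q * B"
    unfolding L2_set_def using S l2_bounded_nonneg[OF x] by (intro real_le_lsqrt) auto
qed

definition column_tail_const :: "real \<Rightarrow> real \<Rightarrow> real" where
  "column_tail_const c q = c * sqrt (2 / (1 - q\<^sup>2))"

lemma column_tail_const_nonneg:
  assumes "exp_decay A c q" shows "0 \<le> column_tail_const c q"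
proof -
  have "0 \<le> c" "q\<^sup>2 < 1" using assms unfolding exp_decay_def by (auto simp: abs_square_less_1)
  thus ?thesis unfolding column_tail_const_def by simp
qed

lemma exp_decay_column_tail:
  assumes A: "exp_decay A c q" and k: "k \<ge> 2"
  shows "l2_bounded (\<lambda>l. if p < index_dist l k then A l k * x else 0)
           (column_tail_const c q * \<bar>x\<bar> * q ^ p)"
  unfolding l2_bounded_def
proof (intro allI impI)
  fix F :: "nat set" assume F: "finite F" "F \<subseteq> {2..}"
  have d: "0 \<le> c" "0 < q" "q < 1" "\<And>m n. m \<ge> 2 \<Longrightarrow> n \<ge> 2 \<Longrightarrow> \<bar>A m n\<bar> \<le> c * q ^ index_dist m n"
    using A unfolding exp_decay_def by auto
  have q2: "0 \<le> q\<^sup>2" "q\<^sup>2 < 1" using d by (auto simp: power_less_one_iff abs_square_less_1)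
  let ?D = "{l\<in>F. Suc p \<le> index_dist l k}"
  have "(\<Sum>l\<in>F. (if p < index_dist l k then A l k * x else 0)\<^sup>2) = (\<Sum>l\<in>?D. (A l k)\<^sup>2 * x\<^sup>2)"
    using F(1) by (intro sum.mono_neutral_cong_right) (auto simp: power_mult_distrib)
  also have "\<dots> \<le> (\<Sum>l\<in>?D. (c\<^sup>2 * x\<^sup>2) * (q\<^sup>2) ^ index_dist l k)"
  proof (rule sum_mono)
    fix l assume "l \<in> ?D"
    hence "\<bar>A l k\<bar> \<le> c * q ^ index_dist l k" using F d(4) k by auto
    hence "(A l k)\<^sup>2 \<le> c\<^sup>2 * (q\<^sup>2) ^ index_dist l k"
      by (metis abs_ge_zero power2_abs power_mono power_mult_distrib power_mult mult.commute)
    from mult_right_mono[OF this, of "x\<^sup>2"] show "(A l k)\<^sup>2 * x\<^sup>2 \<le> (c\<^sup>2 * x\<^sup>2) * (q\<^sup>2) ^ index_dist l k"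
      by (simp add: mult_ac)
  qed
  also have "\<dots> = (c\<^sup>2 * x\<^sup>2) * (\<Sum>l\<in>?D. (q\<^sup>2) ^ index_dist l k)"
    by (simp add: sum_distrib_left)
  also have "\<dots> \<le> (c\<^sup>2 * x\<^sup>2) * (2 * (q\<^sup>2) ^ Suc p / (1 - q\<^sup>2))"
    by (rule mult_left_mono[OF sum_power_index_dist_ge_le[OF q2 F(1)]]) simp
  also have "\<dots> \<le> (c\<^sup>2 * x\<^sup>2) * (2 * (q\<^sup>2) ^ p / (1 - q\<^sup>2))"
    using q2 power_decreasing[of p "Suc p" "q\<^sup>2"]
    by (intro mult_left_mono divide_right_mono) auto
  also have "\<dots> = (column_tail_const c q * \<bar>x\<bar> * q ^ p)\<^sup>2"
    unfolding column_tail_const_def using q2 d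
    by (simp add: power_mult_distrib power_mult[symmetric] mult.commute mult.left_commute)
  finally show "L2_set (\<lambda>l. if p < index_dist l k then A l k * x else 0) F \<le> column_tail_const c q * \<bar>x\<bar> * q ^ p"
    unfolding L2_set_def using d q2 column_tail_const_def by (intro real_le_lsqrt) auto
qed

section \<open>Greedy best N-term approximation\<close>

abbreviation square_summable :: "(nat \<Rightarrow> real) \<Rightarrow> bool" where
  "square_summable v \<equiv> (\<lambda>k. (v k)\<^sup>2) summable_on {2..}"

lemma finite_large_values:
  assumes v: "square_summable v" and e: "e \<noteq> 0"
  shows "finite {j\<in>{2..}. \<bar>e\<bar> \<le> \<bar>v j\<bar>}"
proof (rule ccontr)
  define T where "T = {j\<in>{2..}. \<bar>e\<bar> \<le> \<bar>v j\<bar>}"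
  define tot where "tot = (\<Sum>\<^sub>\<infinity>k\<in>{2..}. (v k)\<^sup>2)"
  define m where "m = nat \<lceil>tot / e\<^sup>2\<rceil> + 1"
  assume "infinite {j\<in>{2..}. \<bar>e\<bar> \<le> \<bar>v j\<bar>}"
  then obtain B where B: "finite B" "card B = m" "B \<subseteq> T"
    using infinite_arbitrarily_large unfolding T_def by blast
  have "real m * e\<^sup>2 = (\<Sum>k\<in>B. e\<^sup>2)" using B by simp
  also have "\<dots> \<le> (\<Sum>k\<in>B. (v k)\<^sup>2)"
    by (rule sum_mono) (use B in \<open>auto simp: T_def abs_le_square_iff\<close>)
  also have "\<dots> \<le> tot" unfolding tot_def
    by (rule finite_sum_le_infsum[OF v B(1)]) (use B in \<open>auto simp: T_def\<close>)
  finally have "real m * e\<^sup>2 \<le> tot" .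
  moreover have "tot / e\<^sup>2 < real m" unfolding m_def by linarith
  hence "tot < real m * e\<^sup>2" using e by (simp add: field_simps)
  ultimately show False by simp
qed

lemma exists_largest_outside:
  assumes v: "square_summable v" and G: "finite G"
  shows "\<exists>k. k \<in> {2..} - G \<and> (\<forall>j\<in>{2..} - G. \<bar>v j\<bar> \<le> \<bar>v k\<bar>)"
proof (cases "\<forall>j\<in>{2..} - G. v j = 0")
  case True
  have "infinite ({2..} - G)" using G by (metis finite_Diff2 infinite_Ici)
  then obtain k where "k \<in> {2..} - G" by (metis finite.emptyI ex_in_conv)
  thus ?thesis using True by auto
next
  case False
  then obtain j0 where j0: "j0 \<in> {2..} - G" "v j0 \<noteq> 0" by auto
  define T where "T = {j\<in>{2..} - G. \<bar>v j0\<bar> \<le> \<bar>v j\<bar>}"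
  have "finite T" unfolding T_def
    by (rule finite_subset[OF _ finite_large_values[OF v j0(2)]]) auto
  hence T: "finite T" "j0 \<in> T" using j0 unfolding T_def by auto
  define \<mu> where "\<mu> = Max ((\<lambda>j. \<bar>v j\<bar>) ` T)"
  have "\<mu> \<in> (\<lambda>j. \<bar>v j\<bar>) ` T" unfolding \<mu>_def using T by (intro Max_in) auto
  then obtain k where k: "k \<in> T" "\<bar>v k\<bar> = \<mu>" by auto
  have "\<bar>v j\<bar> \<le> \<bar>v k\<bar>" if j: "j \<in> {2..} - G" for j
  proof (cases "j \<in> T")
    case True
    thus ?thesis using T k unfolding \<mu>_def by simp
  next
    case False
    hence "\<bar>v j\<bar> < \<bar>v j0\<bar>" using j unfolding T_def by auto
    moreover have "\<bar>v j0\<bar> \<le> \<mu>" using T unfolding \<mu>_def by simp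
    ultimately show ?thesis using k by simp
  qed
  thus ?thesis using k unfolding T_def by blast
qed

definition largest_outside :: "(nat \<Rightarrow> real) \<Rightarrow> nat set \<Rightarrow> nat" where
  "largest_outside v G = (SOME k. k \<in> {2..} - G \<and> (\<forall>j\<in>{2..} - G. \<bar>v j\<bar> \<le> \<bar>v k\<bar>))"

lemma largest_outside:
  assumes "square_summable v" "finite G"
  shows "largest_outside v G \<in> {2..} - G"
    "\<And>j. j \<in> {2..} - G \<Longrightarrow> \<bar>v j\<bar> \<le> \<bar>v (largest_outside v G)\<bar>"
  using someI_ex[OF exists_largest_outside[OF assms]] unfolding largest_outside_def by blast+

primrec greedy_set :: "(nat \<Rightarrow> real) \<Rightarrow> nat \<Rightarrow> nat set" where
  "greedy_set v 0 = {}"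
| "greedy_set v (Suc n) = insert (largest_outside v (greedy_set v n)) (greedy_set v n)"

definition greedy_index :: "(nat \<Rightarrow> real) \<Rightarrow> nat \<Rightarrow> nat" where
  "greedy_index v n = largest_outside v (greedy_set v n)"

lemma greedy_set_props:
  assumes v: "square_summable v"
  shows "finite (greedy_set v n) \<and> greedy_set v n \<subseteq> {2..} \<and> card (greedy_set v n) = n
    \<and> greedy_set v n = greedy_index v ` {..<n}
    \<and> (\<forall>k\<in>greedy_set v n. \<forall>j\<in>{2..} - greedy_set v n. \<bar>v j\<bar> \<le> \<bar>v k\<bar>)"
proof (induction n)
  case 0 thus ?case by simp
next
  case (Suc n)
  hence "finite (greedy_set v n)" by blast
  note new = largest_outside[OF v this]
  show ?case using Suc new by (auto simp: greedy_index_def lessThan_Suc)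
qed

lemma
  assumes v: "square_summable v"
  shows finite_greedy_set: "finite (greedy_set v n)"
    and greedy_set_subset: "greedy_set v n \<subseteq> {2..}"
    and card_greedy_set: "card (greedy_set v n) = n"
    and greedy_set_eq_image: "greedy_set v n = greedy_index v ` {..<n}"
    and greedy_set_dominates:
      "k \<in> greedy_set v n \<Longrightarrow> j \<ge> 2 \<Longrightarrow> j \<notin> greedy_set v n \<Longrightarrow> \<bar>v j\<bar> \<le> \<bar>v k\<bar>"
  using greedy_set_props[OF v, of n] by auto

lemma
  assumes v: "square_summable v"
  shows greedy_index_ge_2: "greedy_index v n \<ge> 2"
    and greedy_index_notin: "greedy_index v n \<notin> greedy_set v n"
    and inj_on_greedy_index: "inj_on (greedy_index v) {..<N}"
proof -
  show "greedy_index v n \<ge> 2" "greedy_index v n \<notin> greedy_set v n"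
    using largest_outside(1)[OF v finite_greedy_set[OF v]] unfolding greedy_index_def by auto
  have "card (greedy_index v ` {..<N}) = card {..<N}"
    using card_greedy_set[OF v, of N] greedy_set_eq_image[OF v, of N] by simp
  thus "inj_on (greedy_index v) {..<N}" by (simp add: inj_on_iff_eq_card)
qed

text \<open>Exchange argument: an index set of size n outside the greedy one can be swapped, element
  by element, against greedy indices without decreasing the sum of squares.\<close>
lemma sum_squares_le_greedy_set:
  assumes v: "square_summable v" and L: "L \<subseteq> {2..}" "finite L" "card L = n"
  shows "(\<Sum>k\<in>L. (v k)\<^sup>2) \<le> (\<Sum>k\<in>greedy_set v n. (v k)\<^sup>2)"
proof -
  define G where "G = greedy_set v n"
  have G: "finite G" "card G = n"
    unfolding G_def using finite_greedy_set[OF v] card_greedy_set[OF v] by auto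
  have "card (L - G) = card (G - L)"
    using L G by (simp add: card_Diff_subset_Int Int_commute)
  then obtain h where h: "bij_betw h (L - G) (G - L)"
    using finite_same_card_bij[of "L - G" "G - L"] L G by auto
  have "(\<Sum>k\<in>L - G. (v k)\<^sup>2) \<le> (\<Sum>k\<in>L - G. (v (h k))\<^sup>2)"
  proof (rule sum_mono)
    fix k assume k: "k \<in> L - G"
    have "h k \<in> G" using h k by (auto simp: bij_betw_def)
    hence "\<bar>v k\<bar> \<le> \<bar>v (h k)\<bar>" using greedy_set_dominates[OF v] k L(1) unfolding G_def by auto
    thus "(v k)\<^sup>2 \<le> (v (h k))\<^sup>2" by (simp add: abs_le_square_iff)
  qed
  also have "\<dots> = (\<Sum>k\<in>G - L. (v k)\<^sup>2)" by (rule sum.reindex_bij_betw[OF h])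
  finally have "(\<Sum>k\<in>L - G. (v k)\<^sup>2) \<le> (\<Sum>k\<in>G - L. (v k)\<^sup>2)" .
  moreover have "(\<Sum>k\<in>L. (v k)\<^sup>2) = (\<Sum>k\<in>L \<inter> G. (v k)\<^sup>2) + (\<Sum>k\<in>L - G. (v k)\<^sup>2)"
    using L(2) by (rule sum.Int_Diff)
  moreover have "(\<Sum>k\<in>G. (v k)\<^sup>2) = (\<Sum>k\<in>G \<inter> L. (v k)\<^sup>2) + (\<Sum>k\<in>G - L. (v k)\<^sup>2)"
    using G(1) by (rule sum.Int_Diff)
  ultimately show ?thesis unfolding G_def by (simp add: Int_commute)
qed

lemma infsum_squares_Diff:
  assumes v: "square_summable v" and X: "X \<subseteq> {2..}" "finite X"
  shows "(\<Sum>\<^sub>\<infinity>k\<in>{2..} - X. (v k)\<^sup>2) = (\<Sum>\<^sub>\<infinity>k\<in>{2..}. (v k)\<^sup>2) - (\<Sum>k\<in>X. (v k)\<^sup>2)"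
  using infsum_Diff[OF v summable_on_finite[OF X(2)] X(1)] X(2) by simp

lemma bdd_below_tail_norms:
  "bdd_below ((\<lambda>\<Lambda>. sqrt (\<Sum>\<^sub>\<infinity>k\<in>{2..} - \<Lambda>. (w k)\<^sup>2)) ` S)"
  by (rule bdd_belowI[of _ 0]) (auto intro!: infsum_nonneg)

lemma best_N_err_greedy:
  assumes v: "square_summable v"
  shows "best_N_err v n = sqrt (\<Sum>\<^sub>\<infinity>k\<in>{2..} - greedy_set v n. (v k)\<^sup>2)"
proof -
  define S :: "nat set set" where "S = {\<Lambda>. \<Lambda> \<subseteq> {2..} \<and> finite \<Lambda> \<and> card \<Lambda> = n}"
  define f where "f = (\<lambda>\<Lambda>. sqrt (\<Sum>\<^sub>\<infinity>k\<in>{2..} - \<Lambda>. (v k)\<^sup>2))"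
  have G: "greedy_set v n \<subseteq> {2..}" "finite (greedy_set v n)" "greedy_set v n \<in> S"
    using finite_greedy_set[OF v] greedy_set_subset[OF v] card_greedy_set[OF v]
    unfolding S_def by auto
  have "f (greedy_set v n) \<le> f L" if "L \<in> S" for L
    using that sum_squares_le_greedy_set[OF v] unfolding S_def f_def
    by (auto simp: infsum_squares_Diff[OF v] G(1,2))
  hence "Inf (f ` S) = f (greedy_set v n)"
    using G(3) by (intro antisym cINF_lower[OF bdd_below_tail_norms[of v S, folded f_def]]
        cINF_greatest) auto
  thus ?thesis unfolding best_N_err_def S_def f_def by simp
qed

lemma best_N_err_nonneg: "best_N_err v n \<ge> 0"
proof -
  obtain B :: "nat set" where B: "finite B" "card B = n" "B \<subseteq> {2..}"
    using infinite_arbitrarily_large[OF infinite_Ici[of "2::nat"]] by blast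
  hence "{\<Lambda>. \<Lambda> \<subseteq> {2::nat..} \<and> finite \<Lambda> \<and> card \<Lambda> = n} \<noteq> {}" by blast
  thus ?thesis unfolding best_N_err_def by (rule cINF_greatest) (simp add: infsum_nonneg)
qed

lemma greedy_tail_l2_bounded:
  assumes v: "square_summable v"
  shows "l2_bounded (\<lambda>k. if k \<in> greedy_set v n then 0 else v k) (best_N_err v n)"
  unfolding l2_bounded_def
proof (intro allI impI)
  fix F :: "nat set" assume F: "finite F" "F \<subseteq> {2..}"
  have G: "greedy_set v n \<subseteq> {2..}" "finite (greedy_set v n)"
    using finite_greedy_set[OF v] greedy_set_subset[OF v] by blast+
  have "(\<Sum>k\<in>F. (if k \<in> greedy_set v n then 0 else v k)\<^sup>2) = (\<Sum>k\<in>F - greedy_set v n. (v k)\<^sup>2)"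
    using F(1) by (intro sum.mono_neutral_cong_right) auto
  also have "\<dots> \<le> (\<Sum>\<^sub>\<infinity>k\<in>{2..} - greedy_set v n. (v k)\<^sup>2)"
    by (rule finite_sum_le_infsum[OF summable_on_Diff[OF v summable_on_finite[OF G(2)] G(1)]])
      (use F in auto)
  finally show "L2_set (\<lambda>k. if k \<in> greedy_set v n then 0 else v k) F \<le> best_N_err v n"
    unfolding best_N_err_greedy[OF v] L2_set_def by simp
qed

lemma l2_bounded_best_N_err_0: "square_summable v \<Longrightarrow> l2_bounded v (best_N_err v 0)"
  using greedy_tail_l2_bounded[of v 0] by simp

lemma abs_greedy_value_le_best_N_err:
  assumes v: "square_summable v"
  shows "\<bar>v (greedy_index v n)\<bar> \<le> best_N_err v n"
proof -
  have "\<bar>if greedy_index v n \<in> greedy_set v n then 0 else v (greedy_index v n)\<bar> \<le> best_N_err v n"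
    by (rule l2_bounded_abs[OF greedy_tail_l2_bounded[OF v] greedy_index_ge_2[OF v]])
  thus ?thesis using greedy_index_notin[OF v, of n] by argo
qed

lemma best_N_err_le_l2_bounded:
  fixes L :: "nat set"
  assumes L: "finite L" "L \<subseteq> {2..}" "card L \<le> M"
    and b: "l2_bounded (\<lambda>k. if k \<in> L then 0 else w k) B"
  shows "best_N_err w M \<le> B"
proof -
  have "infinite ({2..} - L)" using L(1) by (metis finite_Diff2 infinite_Ici)
  then obtain T where T: "finite T" "card T = M - card L" "T \<subseteq> {2..} - L"
    using infinite_arbitrarily_large by blast
  define L' where "L' = L \<union> T"
  have L': "L \<subseteq> L'" "L' \<subseteq> {2..}" "finite L'" "card L' = M"
    using T L card_Un_disjoint[of L T] unfolding L'_def by auto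
  have "l2_bounded (\<lambda>k. if k \<in> L' then 0 else w k) B"
    by (rule l2_bounded_dominated[OF b]) (use L'(1) in auto)
  hence "sqrt (\<Sum>\<^sub>\<infinity>k\<in>{2..}. (if k \<in> L' then 0 else w k)\<^sup>2) \<le> B"
    by (rule l2_bounded_sqrt_infsum_le)
  moreover have "(\<Sum>\<^sub>\<infinity>k\<in>{2..}. (if k \<in> L' then 0 else w k)\<^sup>2) = (\<Sum>\<^sub>\<infinity>k\<in>{2..} - L'. (w k)\<^sup>2)"
    by (rule infsum_cong_neutral) auto
  moreover have "best_N_err w M \<le> sqrt (\<Sum>\<^sub>\<infinity>k\<in>{2..} - L'. (w k)\<^sup>2)"
    unfolding best_N_err_def by (rule cINF_lower[OF bdd_below_tail_norms]) (simp add: L')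
  ultimately show ?thesis by simp
qed

section \<open>Sparse approximation of A v\<close>

lemma apply_mat_greedy_split:
  assumes A: "exp_decay A c q" and v: "square_summable v" and l: "l \<ge> 2"
  shows "apply_mat A v l = apply_mat A (\<lambda>k. if k \<in> greedy_set v N then 0 else v k) l
           + (\<Sum>n<N. A l (greedy_index v n) * v (greedy_index v n))"
proof -
  define G where "G = greedy_set v N"
  have G: "finite G" "G \<subseteq> {2..}"
    unfolding G_def using finite_greedy_set[OF v] greedy_set_subset[OF v] by auto
  define vr where "vr = (\<lambda>k. if k \<in> G then 0 else v k)"
  define vG where "vG = (\<lambda>k. if k \<in> G then v k else 0)"
  have vr: "l2_bounded vr (best_N_err v N)"
    unfolding vr_def G_def by (rule greedy_tail_l2_bounded[OF v])
  have vG: "l2_bounded vG (best_N_err v 0)"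
    unfolding vG_def by (rule l2_bounded_dominated[OF l2_bounded_best_N_err_0[OF v]]) simp
  have "(\<lambda>k. A l k * v k) = (\<lambda>k. A l k * vr k + A l k * vG k)"
    by (auto simp: vr_def vG_def)
  hence "apply_mat A v l = (\<Sum>\<^sub>\<infinity>k\<in>{2..}. A l k * vr k + A l k * vG k)"
    unfolding apply_mat_def using l by simp
  also have "\<dots> = apply_mat A vr l + (\<Sum>\<^sub>\<infinity>k\<in>{2..}. A l k * vG k)"
    unfolding apply_mat_def using l
    by (simp add: infsum_add[OF exp_decay_row_summable[OF A vr l] exp_decay_row_summable[OF A vG l]])
  also have "(\<Sum>\<^sub>\<infinity>k\<in>{2..}. A l k * vG k) = (\<Sum>k\<in>G. A l k * v k)"
    using G by (subst infsum_cong_neutral[where T = G]) (auto simp: vG_def)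
  also have "\<dots> = (\<Sum>n<N. A l (greedy_index v n) * v (greedy_index v n))"
    unfolding G_def greedy_set_eq_image[OF v]
    by (rule sum.reindex[OF inj_on_greedy_index[OF v], unfolded comp_def])
  finally show ?thesis unfolding vr_def G_def .
qed

lemma card_near_indices_le:
  fixes k P :: "nat \<Rightarrow> nat"
  shows "finite {l. \<exists>n<N. index_dist l (k n) \<le> P n}"
    and "card {l. \<exists>n<N. index_dist l (k n) \<le> P n} \<le> (\<Sum>n<N. 2 * P n + 1)"
proof -
  have sub: "{l. \<exists>n<N. index_dist l (k n) \<le> P n} \<subseteq> (\<Union>n<N. {k n - P n .. k n + P n})"
  proof
    fix l assume "l \<in> {l. \<exists>n<N. index_dist l (k n) \<le> P n}"
    then obtain n where n: "n < N" "index_dist l (k n) \<le> P n" by blast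
    hence "l \<in> {k n - P n .. k n + P n}" unfolding index_dist_def by (auto split: if_splits)
    thus "l \<in> (\<Union>n<N. {k n - P n .. k n + P n})" using n(1) by blast
  qed
  thus "finite {l. \<exists>n<N. index_dist l (k n) \<le> P n}" by (rule finite_subset) auto
  have "card {l. \<exists>n<N. index_dist l (k n) \<le> P n} \<le> card (\<Union>n<N. {k n - P n .. k n + P n})"
    by (rule card_mono[OF _ sub]) auto
  also have "\<dots> \<le> (\<Sum>n<N. card {k n - P n .. k n + P n})" by (rule card_UN_le) simp
  also have "\<dots> \<le> (\<Sum>n<N. 2 * P n + 1)" by (rule sum_mono) simp
  finally show "card {l. \<exists>n<N. index_dist l (k n) \<le> P n} \<le> (\<Sum>n<N. 2 * P n + 1)" .
qed

lemma best_N_err_apply_mat_le: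
  assumes A: "exp_decay A c q" and v: "square_summable v"
    and M: "(\<Sum>n<N. 2 * P n + 1) \<le> M"
    and R: "\<And>n. n < N \<Longrightarrow> l2_bounded (\<lambda>l. if P n < index_dist l (greedy_index v n)
                 then A l (greedy_index v n) * v (greedy_index v n) else 0) (R n)"
  shows "best_N_err (apply_mat A v) M \<le> schur_const c q * best_N_err v N + (\<Sum>n<N. R n)"
proof -
  let ?k = "greedy_index v"
  let ?vr = "\<lambda>k. if k \<in> greedy_set v N then 0 else v k"
  define \<Lambda> where "\<Lambda> = {l. l \<ge> 2 \<and> (\<exists>n<N. index_dist l (?k n) \<le> P n)}"
  define e where "e = (\<lambda>l. apply_mat A ?vr l + (\<Sum>n<N. if P n < index_dist l (?k n)
                              then A l (?k n) * v (?k n) else 0))"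
  have e: "l2_bounded e (schur_const c q * best_N_err v N + (\<Sum>n<N. R n))"
    unfolding e_def
    by (rule l2_bounded_add[OF apply_mat_l2_bounded[OF A greedy_tail_l2_bounded[OF v]]
          l2_bounded_sum]) (use R in auto)
  have "apply_mat A v l = e l" if "l \<ge> 2" "l \<notin> \<Lambda>" for l
    using that apply_mat_greedy_split[OF A v, of l N] unfolding e_def \<Lambda>_def
    by (auto intro!: sum.cong)
  hence "l2_bounded (\<lambda>l. if l \<in> \<Lambda> then 0 else apply_mat A v l)
           (schur_const c q * best_N_err v N + (\<Sum>n<N. R n))"
    by (intro l2_bounded_dominated[OF e]) auto
  moreover have \<Lambda>: "\<Lambda> \<subseteq> {l. \<exists>n<N. index_dist l (?k n) \<le> P n}" unfolding \<Lambda>_def by auto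
  hence "finite \<Lambda>" using finite_subset card_near_indices_le(1) by blast
  moreover have "card \<Lambda> \<le> M"
    using card_mono[OF card_near_indices_le(1) \<Lambda>] card_near_indices_le(2)[of N ?k P] M by linarith
  ultimately show ?thesis
    by (intro best_N_err_le_l2_bounded[of \<Lambda>]) (auto simp: \<Lambda>_def)
qed

section \<open>Approximation classes\<close>

lemma in_AG_square_summable: "in_AG eta t v \<Longrightarrow> square_summable v"
  unfolding in_AG_def by blast

lemma best_N_err_mult_exp_le_AG_norm:
  "in_AG eta t v \<Longrightarrow> best_N_err v N * exp (eta * real N powr t) \<le> AG_norm eta t v"
  unfolding in_AG_def AG_norm_def by (intro cSUP_upper) auto

lemma best_N_err_le_AG_norm:
  assumes "in_AG eta t v"
  shows "best_N_err v N \<le> AG_norm eta t v * exp (- (eta * real N powr t))"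
  using mult_right_mono[OF best_N_err_mult_exp_le_AG_norm[OF assms, of N],
      of "exp (- (eta * real N powr t))"]
  by (simp add: mult.assoc flip: exp_add)

lemma AG_norm_nonneg: "in_AG eta t v \<Longrightarrow> 0 \<le> AG_norm eta t v"
  using best_N_err_mult_exp_le_AG_norm[of eta t v 0] best_N_err_nonneg[of v 0]
  by (meson exp_ge_zero order_trans zero_le_mult_iff)

lemma in_AG_of_bound:
  assumes "square_summable w" "\<And>N. best_N_err w N * exp (eta * real N powr t) \<le> B"
  shows "in_AG eta t w \<and> AG_norm eta t w \<le> B"
  using assms unfolding in_AG_def AG_norm_def
  by (auto intro!: cSUP_least bdd_aboveI[of _ B])

lemma apply_mat_square_summable:
  "exp_decay A c q \<Longrightarrow> square_summable v \<Longrightarrow> square_summable (apply_mat A v)"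
  using l2_bounded_summable apply_mat_l2_bounded l2_bounded_best_N_err_0 by blast

lemma best_N_err_apply_mat_le_AG_norm:
  assumes A: "exp_decay A c q" and v: "in_AG eta t v"
  shows "best_N_err (apply_mat A v) M \<le> schur_const c q * AG_norm eta t v"
proof -
  have "l2_bounded (apply_mat A v) (schur_const c q * best_N_err v 0)"
    by (rule apply_mat_l2_bounded[OF A l2_bounded_best_N_err_0[OF in_AG_square_summable[OF v]]])
  hence "best_N_err (apply_mat A v) M \<le> schur_const c q * best_N_err v 0"
    by (intro best_N_err_le_l2_bounded[of "{}"]) auto
  also have "\<dots> \<le> schur_const c q * AG_norm eta t v"
    using best_N_err_le_AG_norm[OF v, of 0] schur_const_nonneg[OF A] by (simp add: mult_left_mono)
  finally show ?thesis .
qed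

lemma mult_exp_le_of_le_exp:
  fixes E B a b d :: real
  assumes "0 \<le> E" "E \<le> B * exp (- a)" "b \<le> a + d"
  shows "E * exp b \<le> B * exp d"
proof -
  have "E * exp b \<le> (B * exp (- a)) * exp (a + d)"
    using assms by (intro mult_mono) auto
  also have "\<dots> = B * exp d" by (simp add: mult.assoc flip: exp_add)
  finally show ?thesis .
qed

lemma powr_add_one_le:
  fixes x t :: real assumes x: "0 \<le> x" and t: "0 < t" "t \<le> 1"
  shows "(x + 1) powr t \<le> x powr t + 1"
proof (cases "x = 0")
  case False
  hence "0 < x" using x by simp
  have "(x + 1) powr t = x * (x + 1) powr (t - 1) + (x + 1) powr (t - 1)"
    using powr_mult_base[of "x + 1" "t - 1"] x by (simp add: algebra_simps)
  also have "\<dots> \<le> x * x powr (t - 1) + 1"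
  proof (rule add_mono)
    show "x * (x + 1) powr (t - 1) \<le> x * x powr (t - 1)"
      using \<open>0 < x\<close> t by (intro mult_left_mono powr_mono2') auto
    show "(x + 1) powr (t - 1) \<le> 1"
      using x t powr_mono2'[of "t - 1" 1 "x + 1"] by simp
  qed
  also have "x * x powr (t - 1) = x powr t"
    using powr_mult_base[of x "t - 1"] x by simp
  finally show ?thesis .
qed simp

section \<open>Banded matrices\<close>

lemma banded_column_tail_zero:
  assumes "banded A p" "k \<ge> 2" "l \<ge> 2"
  shows "(if p < index_dist l k then A l k * x else 0) = 0"
  using assms unfolding banded_def by (auto simp: abs_diff_eq_index_dist)

lemma banded_apply_mat_in_AG:
  assumes A: "exp_decay A c q" and band: "banded A p" and eta: "0 < eta" and t: "0 < t" "t \<le> 1"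
    and v: "in_AG eta t v"
  defines "eta' \<equiv> eta / (2 * real p + 1) powr t"
  shows "in_AG eta' t (apply_mat A v)
    \<and> AG_norm eta' t (apply_mat A v) \<le> (schur_const c q * exp eta) * AG_norm eta t v"
proof (rule in_AG_of_bound[OF apply_mat_square_summable[OF A in_AG_square_summable[OF v]]])
  fix M
  define N where "N = M div (2 * p + 1)"
  have sv: "square_summable v" by (rule in_AG_square_summable[OF v])
  have "best_N_err (apply_mat A v) M \<le> schur_const c q * best_N_err v N + (\<Sum>n<N. 0)"
  proof (rule best_N_err_apply_mat_le[OF A sv, of "\<lambda>n. p"])
    have "(\<Sum>n<N. 2 * p + 1) = N * (2 * p + 1)" by simp
    also have "\<dots> \<le> M" unfolding N_def by (rule div_times_less_eq_dividend)
    finally show "(\<Sum>n<N. 2 * p + 1) \<le> M" .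
    show "l2_bounded (\<lambda>l. if p < index_dist l (greedy_index v n)
            then A l (greedy_index v n) * v (greedy_index v n) else 0) 0" for n
      by (rule l2_bounded_dominated[OF l2_bounded_zero])
        (simp add: banded_column_tail_zero[OF band greedy_index_ge_2[OF sv]])
  qed
  also have "\<dots> \<le> (schur_const c q * AG_norm eta t v) * exp (- (eta * real N powr t))"
    using best_N_err_le_AG_norm[OF v, of N] schur_const_nonneg[OF A]
    by (simp add: mult_left_mono mult.assoc)
  finally have E: "best_N_err (apply_mat A v) M
      \<le> (schur_const c q * AG_norm eta t v) * exp (- (eta * real N powr t))" .
  have "M < (2 * p + 1) + N * (2 * p + 1)"
    unfolding N_def by (rule dividend_less_div_times) simp
  hence "real M < real ((2 * p + 1) + N * (2 * p + 1))" by (simp only: of_nat_less_iff)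
  hence "real M < (real N + 1) * (2 * real p + 1)" by (simp add: algebra_simps)
  hence "real M / (2 * real p + 1) \<le> real N + 1" by (simp add: field_simps)
  hence "(real M / (2 * real p + 1)) powr t \<le> (real N + 1) powr t"
    using t by (intro powr_mono2) auto
  also have "\<dots> \<le> real N powr t + 1" by (rule powr_add_one_le) (use t in auto)
  finally have "(real M / (2 * real p + 1)) powr t \<le> real N powr t + 1" .
  hence "eta * (real M / (2 * real p + 1)) powr t \<le> eta * (real N powr t + 1)"
    using eta by (intro mult_left_mono) auto
  hence "eta' * real M powr t \<le> eta * real N powr t + eta"
    unfolding eta'_def by (simp add: powr_divide algebra_simps)
  from mult_exp_le_of_le_exp[OF best_N_err_nonneg E this]
  show "best_N_err (apply_mat A v) M * exp (eta' * real M powr t)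
      \<le> (schur_const c q * exp eta) * AG_norm eta t v"
    by (simp add: mult_ac)
qed

section \<open>Dense matrices\<close>

lemma powr_diff_le:
  fixes a b r :: real
  assumes b: "0 \<le> b" "b \<le> a" and r: "1 \<le> r"
  shows "a powr r - b powr r \<le> r * a powr (r - 1) * (a - b)"
proof (cases "b = 0")
  case True
  have "a powr r = a * a powr (r - 1)" using powr_mult_base[of a "r - 1"] b by simp
  also have "\<dots> \<le> r * a powr (r - 1) * a"
    using r b mult_right_mono[of 1 r "a * a powr (r - 1)"] by (simp add: mult_ac)
  finally show ?thesis using True by simp
next
  case False
  hence b_pos: "0 < b" using b by simp
  define g where "g = (\<lambda>x. r * a powr (r - 1) * x - x powr r)"
  have deriv: "(g has_real_derivative (r * a powr (r - 1) - r * x powr (r - 1))) (at x)"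
    if "0 < x" for x
    unfolding g_def using that by (auto intro!: derivative_eq_intros)
  have "g b \<le> g a"
  proof (rule DERIV_nonneg_imp_increasing_open[OF b(2)])
    fix x assume x: "b < x" "x < a"
    have "x powr (r - 1) \<le> a powr (r - 1)" using x b_pos r by (intro powr_mono2) auto
    thus "\<exists>y. (g has_real_derivative y) (at x) \<and> 0 \<le> y"
      using deriv[of x] x b_pos r by (auto intro!: exI mult_left_mono)
  next
    show "continuous_on {b..a} g"
      using b_pos by (intro continuous_at_imp_continuous_on ballI DERIV_isCont[OF deriv]) auto
  qed
  thus ?thesis unfolding g_def by (simp add: algebra_simps)
qed

lemma powr_Suc_le:
  assumes "0 < t"
  shows "real (Suc N) powr (1 + t) \<le> real N powr (1 + t) + (1 + t) * real (Suc N) powr t"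
  using powr_diff_le[of "real N" "real (Suc N)" "1 + t"] assms by simp

lemma sum_powr_ge:
  fixes t :: real assumes t: "0 < t"
  shows "real N powr (1 + t) / (1 + t) \<le> (\<Sum>n<Suc N. real n powr t)"
proof (induction N)
  case 0 thus ?case using t by simp
next
  case (Suc N)
  have "real (Suc N) powr (1 + t) / (1 + t)
      \<le> (real N powr (1 + t) + (1 + t) * real (Suc N) powr t) / (1 + t)"
    using powr_Suc_le[OF t, of N] t by (intro divide_right_mono) auto
  also have "\<dots> = real N powr (1 + t) / (1 + t) + real (Suc N) powr t"
    using t by (simp add: add_divide_distrib)
  also have "\<dots> \<le> (\<Sum>n<Suc (Suc N). real n powr t)" using Suc by simp
  finally show ?case .
qed

lemma sum_inverse_square_le_one: "(\<Sum>n<N. 1 / (real (N - n) + 1)\<^sup>2) \<le> 1"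
proof -
  define f where "f = (\<lambda>n. 1 / (real (N - n) + 1))"
  have "(\<Sum>n<N. 1 / (real (N - n) + 1)\<^sup>2) \<le> (\<Sum>n<N. f (Suc n) - f n)"
  proof (rule sum_mono)
    fix n assume n: "n \<in> {..<N}"
    hence pos: "real (N - n) > 0" and "real (N - Suc n) + 1 = real (N - n)" by auto
    hence "f (Suc n) - f n = 1 / (real (N - n) * (real (N - n) + 1))"
      unfolding f_def by (simp add: field_simps)
    also have "\<dots> \<ge> 1 / (real (N - n) + 1)\<^sup>2"
      using pos by (intro divide_left_mono) (auto simp: power2_eq_square)
    finally show "1 / (real (N - n) + 1)\<^sup>2 \<le> f (Suc n) - f n" .
  qed
  also have "\<dots> = f N - f 0" by (rule sum_lessThan_telescope)
  also have "\<dots> \<le> 1" unfolding f_def by simp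
  finally show ?thesis .
qed

text \<open>With c = \<eta>/\<eta>_L and q = exp (-\<eta>_L) the radius makes
  q ^ radius * exp (-\<eta> n^t) at most exp (-\<eta> N^t) / (N - n + 1)^2, whose second factor is summable
  in n.\<close>
definition window_radius :: "real \<Rightarrow> real \<Rightarrow> real \<Rightarrow> nat \<Rightarrow> nat \<Rightarrow> nat" where
  "window_radius c t eL N n =
     nat \<lceil>c * (real N powr t - real n powr t) + 2 * ln (real (N - n) + 1) / eL\<rceil>"

definition window_total :: "real \<Rightarrow> real \<Rightarrow> real \<Rightarrow> nat \<Rightarrow> nat" where
  "window_total c t eL N = (\<Sum>n<N. 2 * window_radius c t eL N n + 1)"

lemma window_radius_ge:
  "c * (real N powr t - real n powr t) + 2 * ln (real (N - n) + 1) / eL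
     \<le> real (window_radius c t eL N n)"
  unfolding window_radius_def by linarith

lemma window_radius_le:
  assumes c: "0 \<le> c" and t: "0 < t" and eL: "0 < eL" and n: "n \<le> N"
  shows "real (window_radius c t eL N n)
    \<le> c * (real N powr t - real n powr t) + 2 * ln (real N + 1) / eL + 1"
proof -
  define x where "x = c * (real N powr t - real n powr t) + 2 * ln (real (N - n) + 1) / eL"
  have "real n powr t \<le> real N powr t" using n t by (intro powr_mono2) auto
  hence "0 \<le> x" unfolding x_def using c eL by (intro add_nonneg_nonneg) auto
  hence "real (window_radius c t eL N n) \<le> x + 1"
    unfolding window_radius_def x_def[symmetric] by linarith
  moreover have "ln (real (N - n) + 1) \<le> ln (real N + 1)" using n by simp
  hence "2 * ln (real (N - n) + 1) / eL \<le> 2 * ln (real N + 1) / eL"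
    using eL by (intro divide_right_mono) auto
  ultimately show ?thesis unfolding x_def by linarith
qed

lemma le_window_total: "N \<le> window_total c t eL N"
  using sum_mono[of "{..<N}" "\<lambda>n. 1::nat" "\<lambda>n. 2 * window_radius c t eL N n + 1"]
  unfolding window_total_def by simp

lemma window_total_le:
  assumes c: "0 \<le> c" and t: "0 < t" and eL: "0 < eL"
  shows "real (window_total c t eL (Suc N))
    \<le> 2 * c * real N powr (1 + t) - 2 * c * (real N powr (1 + t) / (1 + t))
      + 2 * c * (1 + t) * real (Suc N) powr t + real (Suc N) * (4 * ln (real N + 2) / eL + 3)"
proof -
  define L where "L = 2 * ln (real N + 2) / eL"
  have "real (window_total c t eL (Suc N))
      = (\<Sum>n<Suc N. 2 * real (window_radius c t eL (Suc N) n) + 1)"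
    unfolding window_total_def by (simp add: ac_simps)
  also have "\<dots> \<le> (\<Sum>n<Suc N. (2 * c * real (Suc N) powr t + 2 * L + 3) - 2 * c * real n powr t)"
  proof (rule sum_mono)
    fix n assume "n \<in> {..<Suc N}"
    hence "real (window_radius c t eL (Suc N) n)
        \<le> c * (real (Suc N) powr t - real n powr t) + 2 * ln (real (Suc N) + 1) / eL + 1"
      by (intro window_radius_le[OF c t eL]) simp
    moreover have "real (Suc N) + 1 = real N + 2" by simp
    ultimately show "2 * real (window_radius c t eL (Suc N) n) + 1
        \<le> (2 * c * real (Suc N) powr t + 2 * L + 3) - 2 * c * real n powr t"
      unfolding L_def by (simp add: algebra_simps)
  qed
  also have "\<dots> = real (Suc N) * (2 * c * real (Suc N) powr t + 2 * L + 3)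
      - 2 * c * (\<Sum>n<Suc N. real n powr t)"
    by (simp only: sum_subtractf sum_distrib_left[symmetric] sum_constant card_lessThan)
  also have "\<dots> \<le> real (Suc N) * (2 * c * real (Suc N) powr t + 2 * L + 3)
      - 2 * c * (real N powr (1 + t) / (1 + t))"
    using sum_powr_ge[OF t, of N] c by (intro diff_left_mono mult_left_mono) auto
  also have "real (Suc N) * (2 * c * real (Suc N) powr t + 2 * L + 3)
      = 2 * c * real (Suc N) powr (1 + t) + real (Suc N) * (4 * ln (real N + 2) / eL + 3)"
    using powr_mult_base[of "real (Suc N)" t] unfolding L_def by (simp add: algebra_simps)
  finally show ?thesis
    using mult_left_mono[OF powr_Suc_le[OF t, of N], of "2 * c"] c by (simp add: algebra_simps)
qed

lemma window_total_error_le: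
  assumes c: "0 \<le> c" "c \<le> 1" and t: "0 < t" "t \<le> 1" and eL: "0 < eL" and N: "1 \<le> real N"
  shows "2 * c * (1 + t) * real (Suc N) powr t + real (Suc N) * (4 * ln (real N + 2) / eL + 3)
    \<le> real N * (14 + 48 / (eL * t) * real N powr (t / 2))"
proof -
  define Q where "Q = real N powr (t / 2)"
  have Q: "1 \<le> Q" unfolding Q_def using N t by (simp add: ge_one_powr_ge_zero)
  have "real (Suc N) powr t \<le> real (Suc N) powr 1" using t by (intro powr_mono) auto
  hence "real (Suc N) powr t \<le> 2 * real N" using N by simp
  moreover have "2 * c * (1 + t) \<le> 4" using c t mult_le_one[of c t] by (simp add: algebra_simps)
  ultimately have e1: "2 * c * (1 + t) * real (Suc N) powr t \<le> 8 * real N"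
    using mult_mono[of "2 * c * (1 + t)" 4 "real (Suc N) powr t" "2 * real N"] c t by simp
  have "ln (real N + 2) \<le> (real N + 2) powr (t / 2) / (t / 2)"
    using t by (intro ln_powr_bound) auto
  also have "(real N + 2) powr (t / 2) \<le> (3 * real N) powr (t / 2)"
    using N t by (intro powr_mono2) auto
  also have "(3 * real N) powr (t / 2) = 3 powr (t / 2) * Q" unfolding Q_def by (simp add: powr_mult)
  also have "3 powr (t / 2) \<le> (3::real) powr 1" using t by (intro powr_mono) auto
  finally have "ln (real N + 2) \<le> 6 * Q / t"
    using t Q by (simp add: divide_right_mono mult_right_mono field_simps)
  hence "4 * ln (real N + 2) / eL \<le> 4 * (6 * Q / t) / eL"
    using eL by (intro divide_right_mono) auto
  also have "\<dots> = 24 / (eL * t) * Q" by (simp add: field_simps)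
  finally have "4 * ln (real N + 2) / eL + 3 \<le> 24 / (eL * t) * Q + 3" by simp
  hence e2: "real (Suc N) * (4 * ln (real N + 2) / eL + 3) \<le> (2 * real N) * (24 / (eL * t) * Q + 3)"
    using N eL by (intro mult_mono) auto
  show ?thesis using e1 e2 unfolding Q_def by (simp add: algebra_simps)
qed

lemma one_minus_le_window_coefficient:
  fixes c t :: real
  assumes c: "0 \<le> c" and t: "0 < t" "t \<le> 1"
  shows "1 - c \<le> 2 / (1 + t) - 2 * c + 2 * c / (1 + t)"
proof -
  have "(1 - c) * (1 + t) \<le> 2 - 2 * c * (1 + t) + 2 * c"
    using mult_nonneg_nonneg[of "1 - t" "1 + c"] t c by (simp add: algebra_simps)
  hence "1 - c \<le> (2 - 2 * c * (1 + t) + 2 * c) / (1 + t)" using t by (simp add: field_simps)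
  also have "\<dots> = 2 / (1 + t) - 2 * c + 2 * c / (1 + t)"
    using t by (simp add: add_divide_distrib diff_divide_distrib)
  finally show ?thesis .
qed

text \<open>The windows add up to 2 (1 - c t) N^(1+t) / (1 + t) plus lower order terms, and
  c < 1 leaves room to absorb the latter.\<close>
lemma window_total_eventually_le:
  assumes c: "0 < c" "c < 1" and t: "0 < t" "t \<le> 1" and eL: "0 < eL"
  shows "\<exists>N0. \<forall>N\<ge>N0. real (window_total c t eL (Suc N)) \<le> 2 / (1 + t) * real N powr (1 + t)"
proof -
  define W where "W = 48 / (eL * t)"
  define Q0 where "Q0 = (14 + W) / (1 - c)"
  have W: "0 < W" unfolding W_def using eL t by simp
  have Q0: "14 + W \<le> Q0" unfolding Q0_def using c W by (simp add: field_simps)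
  show ?thesis
  proof (intro exI allI impI)
    fix N assume N: "nat \<lceil>Q0 powr (2 / t)\<rceil> + 1 \<le> N"
    define Q where "Q = real N powr (t / 2)"
    define X where "X = real N powr (1 + t)"
    have N1: "1 \<le> real N" using N by simp
    have "Q0 = (Q0 powr (2 / t)) powr (t / 2)" using t Q0 W by (simp add: powr_powr)
    also have "\<dots> \<le> Q"
      unfolding Q_def using N t by (intro powr_mono2) (auto intro: order_trans[OF of_nat_ceiling])
    finally have Q: "Q0 \<le> Q" .
    have X: "X = real N * (Q * Q)"
      unfolding X_def Q_def using N1 powr_mult_base[of "real N" t]
      by (simp flip: powr_add)
    have main: "(1 - c) * X \<le> 2 / (1 + t) * X - 2 * c * X + 2 * c * (X / (1 + t))"
      using mult_right_mono[OF one_minus_le_window_coefficient, of c t X] c t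
      unfolding X_def by (simp add: algebra_simps)
    have "14 + W \<le> (1 - c) * Q" using Q Q0 c unfolding Q0_def by (simp add: field_simps)
    hence "14 + W * Q \<le> (1 - c) * (Q * Q)"
      using Q Q0 W mult_right_mono[of "14 + W" "(1 - c) * Q" Q] by (simp add: algebra_simps)
    hence "real N * (14 + W * Q) \<le> real N * ((1 - c) * (Q * Q))"
      using N1 by (intro mult_left_mono) auto
    hence big: "real N * (14 + W * Q) \<le> (1 - c) * X" unfolding X by (simp add: algebra_simps)
    have "real (window_total c t eL (Suc N))
        \<le> 2 * c * X - 2 * c * (X / (1 + t)) + (2 * c * (1 + t) * real (Suc N) powr t
            + real (Suc N) * (4 * ln (real N + 2) / eL + 3))"
      using window_total_le[OF less_imp_le[OF c(1)] t(1) eL, of N]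
      unfolding X_def by (simp only: add.assoc)
    also have "\<dots> \<le> 2 * c * X - 2 * c * (X / (1 + t)) + real N * (14 + W * Q)"
      using window_total_error_le[OF less_imp_le[OF c(1)] less_imp_le[OF c(2)] t eL N1]
      unfolding Q_def W_def by (rule add_left_mono)
    also have "\<dots> \<le> 2 * c * X - 2 * c * (X / (1 + t)) + (1 - c) * X"
      using big by (rule add_left_mono)
    also have "\<dots> \<le> 2 / (1 + t) * X" using main by linarith
    finally show "real (window_total c t eL (Suc N)) \<le> 2 / (1 + t) * real N powr (1 + t)"
      unfolding X_def .
  qed
qed

lemma exists_last_window_total:
  assumes "window_total c t eL N0 \<le> M"
  obtains N where "N0 \<le> N" "window_total c t eL N \<le> M" "M < window_total c t eL (Suc N)"
proof -
  define S where "S = {N. window_total c t eL N \<le> M}"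
  have "S \<subseteq> {..M}"
  proof
    fix N assume "N \<in> S"
    thus "N \<in> {..M}" using le_window_total[of N c t eL] unfolding S_def by simp
  qed
  hence S: "finite S" "N0 \<in> S" using assms finite_subset unfolding S_def by auto
  show ?thesis
  proof
    show "N0 \<le> Max S" "window_total c t eL (Max S) \<le> M"
      using S Max_in[of S] unfolding S_def by auto
    have "Suc (Max S) \<notin> S" using Max_ge[OF S(1), of "Suc (Max S)"] by auto
    thus "M < window_total c t eL (Suc (Max S))" unfolding S_def by simp
  qed
qed

lemma zeta_mult_powr_le:
  assumes t: "0 < t" and eta: "0 \<le> eta" and M: "real M \<le> 2 / (1 + t) * real N powr (1 + t)"
  shows "zeta t * eta * real M powr (t / (1 + t)) \<le> eta * real N powr t"
proof -
  define s where "s = t / (1 + t)"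
  have "real M powr s \<le> (2 / (1 + t) * real N powr (1 + t)) powr s"
    using M t unfolding s_def by (intro powr_mono2) auto
  also have "\<dots> = (2 / (1 + t)) powr s * (real N powr (1 + t)) powr s"
    by (rule powr_mult)
  also have "(real N powr (1 + t)) powr s = real N powr t"
    using t unfolding s_def by (simp add: powr_powr)
  finally have "zeta t * eta * real M powr s
      \<le> zeta t * eta * ((2 / (1 + t)) powr s * real N powr t)"
    using eta by (intro mult_left_mono) (auto simp: zeta_def)
  also have "\<dots> = eta * real N powr t * (zeta t * (2 / (1 + t)) powr s)"
    by (simp only: mult_ac)
  also have "zeta t * (2 / (1 + t)) powr s = ((1 + t) / 2 * (2 / (1 + t))) powr s"
    unfolding zeta_def s_def by (simp only: powr_mult)
  also have "(1 + t) / 2 * (2 / (1 + t)) = (1::real)" using t by simp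
  finally show ?thesis unfolding s_def by simp
qed

lemma dense_column_tail_l2_bounded:
  assumes A: "exp_decay A cA (exp (- eL))" and v: "in_AG eta t v" and eL: "0 < eL" and n: "n < N"
  shows "l2_bounded (\<lambda>l. if window_radius (eta / eL) t eL N n < index_dist l (greedy_index v n)
      then A l (greedy_index v n) * v (greedy_index v n) else 0)
    (column_tail_const cA (exp (- eL)) * AG_norm eta t v * exp (- (eta * real N powr t))
      * (1 / (real (N - n) + 1)\<^sup>2))"
proof -
  let ?P = "window_radius (eta / eL) t eL N n" and ?k = "greedy_index v n"
  let ?D = "column_tail_const cA (exp (- eL))" and ?K = "AG_norm eta t v"
  define y where "y = real (N - n) + 1"
  have y: "0 < y" unfolding y_def by simp
  have D: "0 \<le> ?D" by (rule column_tail_const_nonneg[OF A])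
  have vk: "\<bar>v ?k\<bar> \<le> ?K * exp (- (eta * real n powr t))"
    using abs_greedy_value_le_best_N_err[OF in_AG_square_summable[OF v]]
      best_N_err_le_AG_norm[OF v] order_trans by blast
  define x where "x = eta / eL * (real N powr t - real n powr t) + 2 * ln y / eL"
  have "x \<le> real ?P" unfolding x_def y_def by (rule window_radius_ge)
  have "exp (- eL) ^ ?P = exp (- (eL * real ?P))" by (simp add: mult_ac flip: exp_of_nat_mult)
  also have "\<dots> \<le> exp (- (eL * x))" using \<open>x \<le> real ?P\<close> eL by simp
  also have "- (eL * x) = - (eta * real N powr t) + eta * real n powr t - 2 * ln y"
    unfolding x_def using eL by (simp add: field_simps)
  also have "exp (2 * ln y) = y\<^sup>2" using exp_of_nat_mult[of 2 "ln y"] y by simp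
  hence "exp (- (eta * real N powr t) + eta * real n powr t - 2 * ln y)
      = exp (- (eta * real N powr t)) * exp (eta * real n powr t) * (1 / y\<^sup>2)"
    by (simp add: exp_add exp_diff exp_minus field_simps)
  finally have q: "exp (- eL) ^ ?P
      \<le> exp (- (eta * real N powr t)) * exp (eta * real n powr t) * (1 / y\<^sup>2)" .
  have "?D * \<bar>v ?k\<bar> * exp (- eL) ^ ?P
      \<le> ?D * (?K * exp (- (eta * real n powr t)))
          * (exp (- (eta * real N powr t)) * exp (eta * real n powr t) * (1 / y\<^sup>2))"
    using vk q D by (intro mult_mono) auto
  also have "\<dots> = ?D * ?K * exp (- (eta * real N powr t)) * (1 / y\<^sup>2)"
    by (simp add: mult_ac flip: exp_add)
  finally show ?thesis
    unfolding y_def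
    by (intro l2_bounded_mono[OF exp_decay_column_tail[OF A greedy_index_ge_2]]
        in_AG_square_summable[OF v])
qed

lemma dense_best_N_err_apply_mat_le:
  assumes A: "exp_decay A cA (exp (- eL))" and v: "in_AG eta t v" and eL: "0 < eL"
    and M: "window_total (eta / eL) t eL N \<le> M"
  shows "best_N_err (apply_mat A v) M
    \<le> (schur_const cA (exp (- eL)) + column_tail_const cA (exp (- eL))) * AG_norm eta t v
        * exp (- (eta * real N powr t))"
proof -
  let ?S = "schur_const cA (exp (- eL))" and ?D = "column_tail_const cA (exp (- eL))"
  let ?K = "AG_norm eta t v" and ?e = "exp (- (eta * real N powr t))"
  have "best_N_err (apply_mat A v) M
      \<le> ?S * best_N_err v N + (\<Sum>n<N. ?D * ?K * ?e * (1 / (real (N - n) + 1)\<^sup>2))"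
    using M dense_column_tail_l2_bounded[OF A v eL]
    by (intro best_N_err_apply_mat_le[OF A in_AG_square_summable[OF v]])
      (auto simp: window_total_def)
  also have "?S * best_N_err v N \<le> ?S * (?K * ?e)"
    using best_N_err_le_AG_norm[OF v] schur_const_nonneg[OF A] by (intro mult_left_mono)
  also have "(\<Sum>n<N. ?D * ?K * ?e * (1 / (real (N - n) + 1)\<^sup>2)) \<le> ?D * ?K * ?e * 1"
    unfolding sum_distrib_left[symmetric]
    using sum_inverse_square_le_one[of N] column_tail_const_nonneg[OF A] AG_norm_nonneg[OF v]
    by (intro mult_left_mono) auto
  finally show ?thesis by (simp add: algebra_simps)
qed

lemma dense_best_N_err_mult_exp_le:
  assumes A: "exp_decay A cA (exp (- eL))" and v: "in_AG eta t v" and eL: "0 < eL"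
    and eta: "0 \<le> eta" and t: "0 < t"
    and N0: "\<And>N. N0 \<le> N \<Longrightarrow>
      real (window_total (eta / eL) t eL (Suc N)) \<le> 2 / (1 + t) * real N powr (1 + t)"
    and M: "window_total (eta / eL) t eL N0 \<le> M"
  shows "best_N_err (apply_mat A v) M * exp (zeta t * eta * real M powr (t / (1 + t)))
    \<le> (schur_const cA (exp (- eL)) + column_tail_const cA (exp (- eL))) * AG_norm eta t v"
proof -
  obtain N where N: "N0 \<le> N" "window_total (eta / eL) t eL N \<le> M"
      "M < window_total (eta / eL) t eL (Suc N)"
    using M by (rule exists_last_window_total)
  have "zeta t * eta * real M powr (t / (1 + t)) \<le> eta * real N powr t + 0"
    using zeta_mult_powr_le[of t eta M N] N0[OF N(1)] N(3) t eta by simp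
  from mult_exp_le_of_le_exp[OF best_N_err_nonneg dense_best_N_err_apply_mat_le[OF A v eL N(2)] this]
  show ?thesis by simp
qed

lemma dense_apply_mat_in_AG:
  assumes A: "exp_decay A cA (exp (- eL))" and eta: "0 < eta" "eta < eL" and t: "0 < t" "t \<le> 1"
  shows "\<exists>C. \<forall>v. in_AG eta t v \<longrightarrow>
    in_AG (zeta t * eta) (t / (1 + t)) (apply_mat A v)
    \<and> AG_norm (zeta t * eta) (t / (1 + t)) (apply_mat A v) \<le> C * AG_norm eta t v"
proof -
  let ?S = "schur_const cA (exp (- eL))" and ?D = "column_tail_const cA (exp (- eL))"
  let ?c = "eta / eL" and ?s = "t / (1 + t)" and ?eta' = "zeta t * eta"
  have eL: "0 < eL" using eta by simp
  obtain N0 where N0: "\<And>N. N0 \<le> N \<Longrightarrow>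
      real (window_total ?c t eL (Suc N)) \<le> 2 / (1 + t) * real N powr (1 + t)"
    using window_total_eventually_le[of ?c t eL] eta t by auto
  define M0 where "M0 = window_total ?c t eL N0"
  have S: "0 \<le> ?S" and D: "0 \<le> ?D"
    using schur_const_nonneg[OF A] column_tail_const_nonneg[OF A] .
  have eta': "0 \<le> ?eta'" using eta by (simp add: zeta_def)
  show ?thesis
  proof (intro exI allI impI)
    fix v assume v: "in_AG eta t v"
    let ?K = "AG_norm eta t v" and ?E = "best_N_err (apply_mat A v)"
    have K: "0 \<le> ?K" by (rule AG_norm_nonneg[OF v])
    have "?E M * exp (?eta' * real M powr ?s) \<le> (?S * exp (?eta' * real M0 powr ?s) + (?S + ?D)) * ?K"
      for M
    proof (cases "M0 \<le> M")
      case True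
      have "?E M * exp (?eta' * real M powr ?s) \<le> (?S + ?D) * ?K"
        by (rule dense_best_N_err_mult_exp_le[OF A v eL _ t(1) N0 True[unfolded M0_def]])
          (use eta in simp)
      also have "\<dots> \<le> (?S * exp (?eta' * real M0 powr ?s) + (?S + ?D)) * ?K"
        using S K by (intro mult_right_mono) auto
      finally show ?thesis .
    next
      case False
      have "?E M * exp (?eta' * real M powr ?s) \<le> (?S * ?K) * exp (?eta' * real M0 powr ?s)"
        using False t eta' S K best_N_err_apply_mat_le_AG_norm[OF A v] best_N_err_nonneg
        by (intro mult_mono) (auto intro!: mult_left_mono powr_mono2)
      also have "\<dots> \<le> (?S * exp (?eta' * real M0 powr ?s) + (?S + ?D)) * ?K"
        using S D K by (simp add: algebra_simps)
      finally show ?thesis .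
    qed
    thus "in_AG ?eta' ?s (apply_mat A v)
      \<and> AG_norm ?eta' ?s (apply_mat A v) \<le> (?S * exp (?eta' * real M0 powr ?s) + (?S + ?D)) * ?K"
      by (intro in_AG_of_bound apply_mat_square_summable[OF A in_AG_square_summable[OF v]])
  qed
qed

theorem mainTheorem6:
  fixes nu sig :: "real \<Rightarrow> real" and etaL eta t eta_bar t_bar :: real
  assumes nu_smooth: "smooth_fun nu" and sig_smooth: "smooth_fun sig"
    and nu_bounds: "\<exists>nu_lo nu_hi. 0 < nu_lo \<and> (\<forall>x\<in>{-1<..<1}. nu_lo \<le> nu x \<and> nu x \<le> nu_hi)"
    and sig_bounds: "\<exists>sig_hi. \<forall>x\<in>{-1<..<1}. 0 \<le> sig x \<and> sig x \<le> sig_hi"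
    and etaL_pos: "etaL > 0"
    and decay: "in_De (stiffness nu sig) etaL"
    and eta_pos: "eta > 0" and t_range: "0 < t" "t \<le> 1"
    and cases: "(\<exists>p::nat. banded (stiffness nu sig) p \<and>
                    eta_bar = eta / (2 * real p + 1) powr t \<and> t_bar = t)
              \<or> (eta < etaL \<and> eta_bar = zeta t * eta \<and> t_bar = t / (1 + t))"
  shows "\<exists>C. \<forall>v. in_AG eta t v \<longrightarrow>
           in_AG eta_bar t_bar (apply_mat (stiffness nu sig) v) \<and>
           AG_norm eta_bar t_bar (apply_mat (stiffness nu sig) v) \<le> C * AG_norm eta t v"
proof -
  obtain c where A: "exp_decay (stiffness nu sig) c (exp (- etaL))"
    using in_De_imp_exp_decay[OF etaL_pos decay] by blast
  from cases show ?thesis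
  proof
    assume "\<exists>p::nat. banded (stiffness nu sig) p \<and>
      eta_bar = eta / (2 * real p + 1) powr t \<and> t_bar = t"
    then obtain p where "banded (stiffness nu sig) p"
      "eta_bar = eta / (2 * real p + 1) powr t" "t_bar = t" by blast
    thus ?thesis using banded_apply_mat_in_AG[OF A _ eta_pos t_range] by blast
  next
    assume "eta < etaL \<and> eta_bar = zeta t * eta \<and> t_bar = t / (1 + t)"
    thus ?thesis using dense_apply_mat_in_AG[OF A eta_pos _ t_range] by auto
  qed
qed

end
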